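(* Let $G$ be a TDLC-group, $H$ a closed subgroup of $G$, and $M$ a finitely generated projective discrete $\mathbb{Q}[G]$-module with filling norm $\|\cdot\|_M$. Regard $M$ as a discrete $\mathbb{Q}[H]$-module by restriction, and suppose $N$ is a finitely generated direct summand of $M$ in the category of discrete $\mathbb{Q}[H]$-modules. Then $N$ is undistorted with respect to $\|\cdot\|_M$: the restriction of $\|\cdot\|_M$ to $N$ is equivalent to the filling norm of $N$ as a $\mathbb{Q}[H]$-module.
   Context: A TDLC-group is a totally disconnected locally compact Hausdorff topological group. For a TDLC-group $G$, a discrete $\mathbb{Q}[G]$-module is a left $\mathbb{Q}[G]$-module in which every element has open stabilizer; restriction to a closed subgroup $H$ sends discrete $\mathbb{Q}[G]$-modules to discrete $\mathbb{Q}[H]$-modules and projectives to projectives. A $G$-set $\Omega$ is proper if all point stabilizers are compact open; $\mathbb{Q}[\Omega]$ is then a proper permutation module, finitely generated iff $\Omega/G$ is finite, with $\ell_1$-norm $\|\sum a_\omega\omega\|_1=\sum|a_\omega|$. For a finitely generated discrete module $M$ and a surjection $\partial:\mathbb{Q}[\Omega]\twoheadrightarrow M$ from a finitely generated proper permutation module, the filling pseudo-norm is $\|m\|_\partial=\inf\{\|x\|_1:\partial(x)=m\}$; it is unique up to equivalence (each bounded by a constant times the other) and is a norm when $M$ is projective. *)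

theory Defs
  imports "HOL-Analysis.Analysis"
begin

definition tdlc_group :: "'g::{group_add, t2_space} itself \<Rightarrow> bool" where
  "tdlc_group (_ :: 'g itself) \<longleftrightarrow>
     continuous_on UNIV (\<lambda>p :: 'g \<times> 'g. fst p + snd p) \<and>
     continuous_on UNIV (uminus :: 'g \<Rightarrow> 'g) \<and>
     locally_compact_space (euclidean :: 'g topology) \<and>
     (\<forall>x :: 'g. connected_component_set UNIV x = {x})"

definition closed_subgroup :: "'g::{group_add, topological_space} set \<Rightarrow> bool" where
  "closed_subgroup H \<longleftrightarrow> closed H \<and> 0 \<in> H \<and> (\<forall>x\<in>H. \<forall>y\<in>H. x - y \<in> H)"

record ('g, 'm) gmod =
  gcarrier :: "'m set"
  gadd :: "'m \<Rightarrow> 'm \<Rightarrow> 'm"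
  gzero :: 'm
  gsmul :: "rat \<Rightarrow> 'm \<Rightarrow> 'm"
  gact :: "'g \<Rightarrow> 'm \<Rightarrow> 'm"

definition qvs :: "('g, 'm) gmod \<Rightarrow> bool" where
  "qvs M \<longleftrightarrow>
    gzero M \<in> gcarrier M \<and>
    (\<forall>x\<in>gcarrier M. \<forall>y\<in>gcarrier M. gadd M x y \<in> gcarrier M) \<and>
    (\<forall>a. \<forall>x\<in>gcarrier M. gsmul M a x \<in> gcarrier M) \<and>
    (\<forall>x\<in>gcarrier M. \<forall>y\<in>gcarrier M. \<forall>z\<in>gcarrier M.
        gadd M (gadd M x y) z = gadd M x (gadd M y z)) \<and>
    (\<forall>x\<in>gcarrier M. \<forall>y\<in>gcarrier M. gadd M x y = gadd M y x) \<and>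
    (\<forall>x\<in>gcarrier M. gadd M (gzero M) x = x) \<and>
    (\<forall>x\<in>gcarrier M. \<exists>y\<in>gcarrier M. gadd M x y = gzero M) \<and>
    (\<forall>a b. \<forall>x\<in>gcarrier M. gsmul M (a + b) x = gadd M (gsmul M a x) (gsmul M b x)) \<and>
    (\<forall>a. \<forall>x\<in>gcarrier M. \<forall>y\<in>gcarrier M.
        gsmul M a (gadd M x y) = gadd M (gsmul M a x) (gsmul M a y)) \<and>
    (\<forall>a b. \<forall>x\<in>gcarrier M. gsmul M (a * b) x = gsmul M a (gsmul M b x)) \<and>
    (\<forall>x\<in>gcarrier M. gsmul M 1 x = x)"

definition dmod :: "'g::{group_add, topological_space} set \<Rightarrow> ('g, 'm) gmod \<Rightarrow> bool" where
  "dmod S M \<longleftrightarrow> qvs M \<and>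
    (\<forall>g\<in>S. \<forall>x\<in>gcarrier M. gact M g x \<in> gcarrier M) \<and>
    (\<forall>x\<in>gcarrier M. gact M 0 x = x) \<and>
    (\<forall>g\<in>S. \<forall>h\<in>S. \<forall>x\<in>gcarrier M. gact M (g + h) x = gact M g (gact M h x)) \<and>
    (\<forall>g\<in>S. \<forall>x\<in>gcarrier M. \<forall>y\<in>gcarrier M.
        gact M g (gadd M x y) = gadd M (gact M g x) (gact M g y)) \<and>
    (\<forall>g\<in>S. \<forall>a. \<forall>x\<in>gcarrier M. gact M g (gsmul M a x) = gsmul M a (gact M g x)) \<and>
    (\<forall>x\<in>gcarrier M. openin (top_of_set S) {g\<in>S. gact M g x = x})"

definition dhom :: "'g set \<Rightarrow> ('g, 'm) gmod \<Rightarrow> ('g, 'n) gmod \<Rightarrow> ('m \<Rightarrow> 'n) \<Rightarrow> bool" where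
  "dhom S M N f \<longleftrightarrow>
    (\<forall>x\<in>gcarrier M. f x \<in> gcarrier N) \<and>
    (\<forall>x\<in>gcarrier M. \<forall>y\<in>gcarrier M. f (gadd M x y) = gadd N (f x) (f y)) \<and>
    (\<forall>a. \<forall>x\<in>gcarrier M. f (gsmul M a x) = gsmul N a (f x)) \<and>
    (\<forall>g\<in>S. \<forall>x\<in>gcarrier M. f (gact M g x) = gact N g (f x))"

definition dsubmod :: "'g set \<Rightarrow> ('g, 'm) gmod \<Rightarrow> 'm set \<Rightarrow> bool" where
  "dsubmod S M W \<longleftrightarrow> W \<subseteq> gcarrier M \<and> gzero M \<in> W \<and>
    (\<forall>x\<in>W. \<forall>y\<in>W. gadd M x y \<in> W) \<and> (\<forall>a. \<forall>x\<in>W. gsmul M a x \<in> W) \<and>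
    (\<forall>g\<in>S. \<forall>x\<in>W. gact M g x \<in> W)"

definition dfg :: "'g set \<Rightarrow> ('g, 'm) gmod \<Rightarrow> bool" where
  "dfg S M \<longleftrightarrow> (\<exists>F. finite F \<and> F \<subseteq> gcarrier M \<and>
      gcarrier M = \<Inter>{W. dsubmod S M W \<and> F \<subseteq> W})"

text \<open>Because HOL cannot quantify over types inside a formula, the test
  modules are those whose carriers live in the fixed (sufficiently large) type
  (pairs of a group element and a natural number, to rat).\<close>
definition dproj :: "'g::{group_add, topological_space} set \<Rightarrow> ('g, 'm) gmod \<Rightarrow> bool" where
  "dproj S M \<longleftrightarrow>
    (\<forall>(A :: ('g, 'g \<times> nat \<Rightarrow> rat) gmod) (B :: ('g, 'g \<times> nat \<Rightarrow> rat) gmod) p f.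
       dmod S A \<and> dmod S B \<and> dhom S A B p \<and> p ` gcarrier A = gcarrier B \<and> dhom S M B f
       \<longrightarrow> (\<exists>f'. dhom S M A f' \<and> (\<forall>x\<in>gcarrier M. p (f' x) = f x)))"

definition proper_gset :: "'g::{group_add, topological_space} set \<Rightarrow> 'w set \<Rightarrow> ('g \<Rightarrow> 'w \<Rightarrow> 'w) \<Rightarrow> bool" where
  "proper_gset S \<Omega> \<alpha> \<longleftrightarrow>
    (\<forall>g\<in>S. \<forall>w\<in>\<Omega>. \<alpha> g w \<in> \<Omega>) \<and>
    (\<forall>w\<in>\<Omega>. \<alpha> 0 w = w) \<and>
    (\<forall>g\<in>S. \<forall>h\<in>S. \<forall>w\<in>\<Omega>. \<alpha> (g + h) w = \<alpha> g (\<alpha> h w)) \<and>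
    (\<forall>w\<in>\<Omega>. compact {g\<in>S. \<alpha> g w = w} \<and> openin (top_of_set S) {g\<in>S. \<alpha> g w = w})"

definition finite_orbits :: "'g set \<Rightarrow> 'w set \<Rightarrow> ('g \<Rightarrow> 'w \<Rightarrow> 'w) \<Rightarrow> bool" where
  "finite_orbits S \<Omega> \<alpha> \<longleftrightarrow>
    (\<exists>F. finite F \<and> F \<subseteq> \<Omega> \<and> \<Omega> = {\<alpha> g w | g w. g \<in> S \<and> w \<in> F})"

definition permmod :: "'w set \<Rightarrow> ('g::group_add \<Rightarrow> 'w \<Rightarrow> 'w) \<Rightarrow> ('g, 'w \<Rightarrow> rat) gmod" where
  "permmod \<Omega> \<alpha> =
    \<lparr> gcarrier = {x. finite {w. x w \<noteq> 0} \<and> {w. x w \<noteq> 0} \<subseteq> \<Omega>},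
      gadd = (\<lambda>x y w. x w + y w),
      gzero = (\<lambda>w. 0),
      gsmul = (\<lambda>a x w. a * x w),
      gact = (\<lambda>g x w. if w \<in> \<Omega> then x (\<alpha> (- g) w) else 0) \<rparr>"

definition l1norm :: "('w \<Rightarrow> rat) \<Rightarrow> real" where
  "l1norm x = real_of_rat (\<Sum>w\<in>{w. x w \<noteq> 0}. \<bar>x w\<bar>)"

definition filling_pres ::
  "'g::{group_add, topological_space} set \<Rightarrow> 'w set \<Rightarrow> ('g \<Rightarrow> 'w \<Rightarrow> 'w) \<Rightarrow> ('g, 'm) gmod
     \<Rightarrow> (('w \<Rightarrow> rat) \<Rightarrow> 'm) \<Rightarrow> bool" where
  "filling_pres S \<Omega> \<alpha> M d \<longleftrightarrow>
    proper_gset S \<Omega> \<alpha> \<and> finite_orbits S \<Omega> \<alpha> \<and>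
    dhom S (permmod \<Omega> \<alpha>) M d \<and> d ` gcarrier (permmod \<Omega> \<alpha>) = gcarrier M"

definition filling_norm :: "'w set \<Rightarrow> ('g::group_add \<Rightarrow> 'w \<Rightarrow> 'w) \<Rightarrow> (('w \<Rightarrow> rat) \<Rightarrow> 'm) \<Rightarrow> 'm \<Rightarrow> real" where
  "filling_norm \<Omega> \<alpha> d m =
    Inf {l1norm x | x. x \<in> gcarrier (permmod \<Omega> \<alpha> :: ('g, 'w \<Rightarrow> rat) gmod) \<and> d x = m}"

end

(* The inclusion of N into M is bounded for every finitely generated H-submodule N: the finitely
   many H-orbit representatives of a presentation of N lift to M once and for all, and by
   equivariance the translates of these lifts are lifts of the same l1-norm.
   Conversely, projectivity of M yields a G-equivariant section s of the presentation d of M,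
   and the direct sum decomposition an H-equivariant projection pi of M onto N. As N is
   finitely generated, s maps N into the span of finitely many H-orbits, on which pi o d is
   bounded by the same orbit argument; since n = pi (d (s n)) for n in N, the filling norm of
   N is bounded by that of M. *)

theory Submission
  imports Defs
begin

context
  fixes M :: "('g, 'm) gmod"
  assumes qvs: "qvs M"
begin

lemma qvs_zero_closed [simp, intro]: "gzero M \<in> gcarrier M"
  using qvs unfolding qvs_def by (elim conjE) blast

lemma qvs_add_closed [simp, intro]:
  "x \<in> gcarrier M \<Longrightarrow> y \<in> gcarrier M \<Longrightarrow> gadd M x y \<in> gcarrier M"
  using qvs unfolding qvs_def by (elim conjE) blast

lemma qvs_smul_closed [simp, intro]: "x \<in> gcarrier M \<Longrightarrow> gsmul M a x \<in> gcarrier M"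
  using qvs unfolding qvs_def by (elim conjE) blast

lemma qvs_add_assoc:
  "x \<in> gcarrier M \<Longrightarrow> y \<in> gcarrier M \<Longrightarrow> z \<in> gcarrier M \<Longrightarrow>
   gadd M (gadd M x y) z = gadd M x (gadd M y z)"
  using qvs unfolding qvs_def by (elim conjE) blast

lemma qvs_add_commute: "x \<in> gcarrier M \<Longrightarrow> y \<in> gcarrier M \<Longrightarrow> gadd M x y = gadd M y x"
  using qvs unfolding qvs_def by (elim conjE) blast

lemma qvs_add_zero_left [simp]: "x \<in> gcarrier M \<Longrightarrow> gadd M (gzero M) x = x"
  using qvs unfolding qvs_def by (elim conjE) blast

lemma qvs_add_zero_right [simp]: "x \<in> gcarrier M \<Longrightarrow> gadd M x (gzero M) = x"
  using qvs_add_commute[of x "gzero M"] by simp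

lemma qvs_add_inverse: "x \<in> gcarrier M \<Longrightarrow> \<exists>y\<in>gcarrier M. gadd M x y = gzero M"
  using qvs unfolding qvs_def by (elim conjE) blast

lemma qvs_smul_add_left:
  "x \<in> gcarrier M \<Longrightarrow> gsmul M (a + b) x = gadd M (gsmul M a x) (gsmul M b x)"
  using qvs unfolding qvs_def by (elim conjE) blast

lemma qvs_smul_add_right:
  "x \<in> gcarrier M \<Longrightarrow> y \<in> gcarrier M \<Longrightarrow>
   gsmul M a (gadd M x y) = gadd M (gsmul M a x) (gsmul M a y)"
  using qvs unfolding qvs_def by (elim conjE) blast

lemma qvs_smul_smul: "x \<in> gcarrier M \<Longrightarrow> gsmul M (a * b) x = gsmul M a (gsmul M b x)"
  using qvs unfolding qvs_def by (elim conjE) blast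

lemma qvs_smul_one [simp]: "x \<in> gcarrier M \<Longrightarrow> gsmul M 1 x = x"
  using qvs unfolding qvs_def by simp

lemma qvs_add_left_commute:
  "x \<in> gcarrier M \<Longrightarrow> y \<in> gcarrier M \<Longrightarrow> z \<in> gcarrier M \<Longrightarrow>
   gadd M x (gadd M y z) = gadd M y (gadd M x z)"
  by (metis qvs_add_assoc qvs_add_commute)

lemma qvs_add_right_cancel:
  assumes "x \<in> gcarrier M" "y \<in> gcarrier M" "z \<in> gcarrier M" "gadd M x z = gadd M y z"
  shows "x = y"
proof -
  obtain u where u: "u \<in> gcarrier M" "gadd M z u = gzero M"
    using qvs_add_inverse assms(3) by blast
  have "x = gadd M (gadd M x z) u" using assms u qvs_add_assoc[of x z u] by simp
  also have "\<dots> = gadd M (gadd M y z) u" using assms by simp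
  also have "\<dots> = y" using assms u qvs_add_assoc[of y z u] by simp
  finally show ?thesis .
qed

lemma qvs_smul_zero_left [simp]: "x \<in> gcarrier M \<Longrightarrow> gsmul M 0 x = gzero M"
  using qvs_add_right_cancel[of "gsmul M 0 x" "gzero M" "gsmul M 0 x"]
    qvs_smul_add_left[of x 0 0] by simp

lemma qvs_smul_zero_right [simp]: "gsmul M a (gzero M) = gzero M"
  using qvs_add_right_cancel[of "gsmul M a (gzero M)" "gzero M" "gsmul M a (gzero M)"]
    qvs_smul_add_right[of "gzero M" "gzero M" a] by simp

lemma qvs_add_neg: "x \<in> gcarrier M \<Longrightarrow> gadd M x (gsmul M (-1) x) = gzero M"
  using qvs_smul_add_left[of x 1 "-1"] by simp

lemma qvs_neg_add_cancel_left:
  assumes "x \<in> gcarrier M" "y \<in> gcarrier M"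
  shows "gadd M (gsmul M (-1) x) (gadd M x y) = y"
  using assms qvs_add_assoc[of "gsmul M (-1) x" x y] qvs_add_neg[of x]
    qvs_add_commute[of x "gsmul M (-1) x"] by simp

lemma qvs_diff_eq_zero:
  assumes "x \<in> gcarrier M" "y \<in> gcarrier M" "gadd M x (gsmul M (-1) y) = gzero M"
  shows "x = y"
proof -
  have "x = gadd M (gsmul M (-1) y) (gadd M y x)"
    using assms qvs_neg_add_cancel_left by simp
  also have "\<dots> = y"
    using assms qvs_add_left_commute[of "gsmul M (-1) y" y x] qvs_add_commute by simp
  finally show ?thesis .
qed

lemma qvs_diff_eq_diff:
  assumes C: "x \<in> gcarrier M" "y \<in> gcarrier M" "x' \<in> gcarrier M" "y' \<in> gcarrier M"
    and eq: "gadd M x y = gadd M x' y'"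
  shows "gadd M x (gsmul M (-1) x') = gadd M y' (gsmul M (-1) y)"
proof (rule qvs_add_right_cancel)
  have "gadd M (gadd M x (gsmul M (-1) x')) (gadd M x' y) = gadd M x y"
    using C qvs_add_assoc qvs_neg_add_cancel_left by simp
  also have "\<dots> = gadd M (gadd M y' (gsmul M (-1) y)) (gadd M x' y)"
    using C eq qvs_add_assoc qvs_add_commute[of x' y] qvs_neg_add_cancel_left
      qvs_add_commute[of x' y'] by simp
  finally show "gadd M (gadd M x (gsmul M (-1) x')) (gadd M x' y) =
      gadd M (gadd M y' (gsmul M (-1) y)) (gadd M x' y)" .
qed (use C in auto)

end

lemma dsubmodD:
  assumes "dsubmod S M W"
  shows "W \<subseteq> gcarrier M" "gzero M \<in> W" "\<And>x y. x \<in> W \<Longrightarrow> y \<in> W \<Longrightarrow> gadd M x y \<in> W"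
    "\<And>x a. x \<in> W \<Longrightarrow> gsmul M a x \<in> W" "\<And>g x. g \<in> S \<Longrightarrow> x \<in> W \<Longrightarrow> gact M g x \<in> W"
  using assms unfolding dsubmod_def by blast+

lemma qvs_subspace:
  assumes qvs: "qvs M" and W: "dsubmod S M W"
  shows "qvs (M\<lparr>gcarrier := W\<rparr>)"
proof -
  note WD = dsubmodD[OF W]
  have C: "x \<in> W \<Longrightarrow> x \<in> gcarrier M" for x using WD(1) by blast
  have "\<exists>y\<in>W. gadd M x y = gzero M" if "x \<in> W" for x
    using that WD(4) qvs_add_neg[OF qvs] C by blast
  then show ?thesis
    unfolding qvs_def
    using qvs WD C qvs_add_assoc[OF qvs] qvs_add_commute[OF qvs] qvs_smul_add_left[OF qvs]
      qvs_smul_add_right[OF qvs] qvs_smul_smul[OF qvs] by (simp add: subset_iff)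
qed

lemma direct_sum_unique:
  assumes qvs: "qvs M" and N: "dsubmod S M N" and K: "dsubmod S M K"
    and NK: "N \<inter> K = {gzero M}"
    and a: "a \<in> N" "a' \<in> N" and b: "b \<in> K" "b' \<in> K"
    and eq: "gadd M a b = gadd M a' b'"
  shows "a = a'"
proof -
  have C: "a \<in> gcarrier M" "a' \<in> gcarrier M" "b \<in> gcarrier M" "b' \<in> gcarrier M"
    using a b dsubmodD(1)[OF N] dsubmodD(1)[OF K] by auto
  have "gadd M a (gsmul M (-1) a') \<in> N" using a dsubmodD(3,4)[OF N] by simp
  moreover have "gadd M a (gsmul M (-1) a') \<in> K"
    using qvs_diff_eq_diff[OF qvs C(1,3,2,4) eq] b dsubmodD(3,4)[OF K] by simp
  ultimately have "gadd M a (gsmul M (-1) a') = gzero M" using NK by blast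
  then show ?thesis using qvs_diff_eq_zero[OF qvs C(1,2)] by simp
qed

definition summand_proj :: "('g, 'm) gmod \<Rightarrow> 'm set \<Rightarrow> 'm set \<Rightarrow> 'm \<Rightarrow> 'm" where
  "summand_proj M N K m = (THE a. a \<in> N \<and> (\<exists>b\<in>K. m = gadd M a b))"

context
  fixes S and M :: "('g, 'm) gmod" and N K
  assumes qvs: "qvs M" and N: "dsubmod S M N" and K: "dsubmod S M K"
    and NK: "N \<inter> K = {gzero M}"
    and span: "\<forall>x\<in>gcarrier M. \<exists>a\<in>N. \<exists>b\<in>K. x = gadd M a b"
begin

lemma summand_proj_add: "a \<in> N \<Longrightarrow> b \<in> K \<Longrightarrow> summand_proj M N K (gadd M a b) = a"
  unfolding summand_proj_def
  by (rule the_equality) (use direct_sum_unique[OF qvs N K NK] in blast)+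

lemma summand_proj_split:
  "x \<in> gcarrier M \<Longrightarrow> \<exists>a\<in>N. \<exists>b\<in>K. x = gadd M a b \<and> summand_proj M N K x = a"
  using span summand_proj_add by metis

lemma summand_proj_in: "x \<in> gcarrier M \<Longrightarrow> summand_proj M N K x \<in> N"
  using summand_proj_split by blast

lemma summand_proj_id:
  assumes "n \<in> N"
  shows "summand_proj M N K n = n"
  using summand_proj_add[OF assms dsubmodD(2)[OF K]] assms dsubmodD(1)[OF N]
  by (metis qvs qvs_add_zero_right subsetD)

lemma dhom_summand_proj:
  assumes act_add: "\<forall>g\<in>S. \<forall>x\<in>gcarrier M. \<forall>y\<in>gcarrier M.
                      gact M g (gadd M x y) = gadd M (gact M g x) (gact M g y)"
  shows "dhom S M M (summand_proj M N K)"
  unfolding dhom_def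
proof (intro conjI ballI allI)
  note ND = dsubmodD[OF N] and KD = dsubmodD[OF K]
  have C: "x \<in> N \<Longrightarrow> x \<in> gcarrier M" "x \<in> K \<Longrightarrow> x \<in> gcarrier M" for x
    using ND(1) KD(1) by blast+
  fix x assume x: "x \<in> gcarrier M"
  then obtain a b where ab: "a \<in> N" "b \<in> K" "x = gadd M a b" "summand_proj M N K x = a"
    using summand_proj_split by meson
  show "summand_proj M N K x \<in> gcarrier M" using ab C by simp
  show "summand_proj M N K (gsmul M c x) = gsmul M c (summand_proj M N K x)" for c
    using ab C qvs_smul_add_right[OF qvs] summand_proj_add ND(4) KD(4) by simp
  show "summand_proj M N K (gact M g x) = gact M g (summand_proj M N K x)" if "g \<in> S" for g
    using ab C act_add that summand_proj_add ND(5) KD(5) by simp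
  fix y assume "y \<in> gcarrier M"
  then obtain a' b' where ab': "a' \<in> N" "b' \<in> K" "y = gadd M a' b'" "summand_proj M N K y = a'"
    using summand_proj_split by meson
  have "gadd M x y = gadd M a (gadd M b (gadd M a' b'))"
    using qvs ab ab' C qvs_add_assoc[OF qvs] by simp
  also have "\<dots> = gadd M a (gadd M a' (gadd M b b'))"
    using qvs ab ab' C qvs_add_left_commute[OF qvs] by simp
  also have "\<dots> = gadd M (gadd M a a') (gadd M b b')"
    using qvs ab ab' C qvs_add_assoc[OF qvs] by simp
  finally show "summand_proj M N K (gadd M x y) =
      gadd M (summand_proj M N K x) (summand_proj M N K y)"
    using ab ab' summand_proj_add ND(3) KD(3) by simp
qed

end

section \<open>Permutation modules and the \<open>\<ell>\<^sub>1\<close>-norm\<close>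

definition supp :: "('w \<Rightarrow> rat) \<Rightarrow> 'w set" where
  "supp x = {w. x w \<noteq> 0}"

definition fin_supp :: "'w set \<Rightarrow> ('w \<Rightarrow> rat) set" where
  "fin_supp A = {x. finite (supp x) \<and> supp x \<subseteq> A}"

definition delta :: "'w \<Rightarrow> 'w \<Rightarrow> rat" where
  "delta w = (\<lambda>u. if u = w then 1 else 0)"

definition perm_act :: "'w set \<Rightarrow> ('g::group_add \<Rightarrow> 'w \<Rightarrow> 'w) \<Rightarrow> 'g \<Rightarrow> ('w \<Rightarrow> rat) \<Rightarrow> 'w \<Rightarrow> rat" where
  "perm_act \<Omega> \<alpha> g x = (\<lambda>w. if w \<in> \<Omega> then x (\<alpha> (- g) w) else 0)"

lemma permmod_simps [simp]:
  "gcarrier (permmod \<Omega> \<alpha>) = fin_supp \<Omega>"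
  "gadd (permmod \<Omega> \<alpha>) = (\<lambda>x y w. x w + y w)"
  "gzero (permmod \<Omega> \<alpha>) = (\<lambda>w. 0)"
  "gsmul (permmod \<Omega> \<alpha>) = (\<lambda>a x w. a * x w)"
  "gact (permmod \<Omega> \<alpha>) = perm_act \<Omega> \<alpha>"
  by (auto simp: permmod_def fin_supp_def supp_def perm_act_def fun_eq_iff)

lemma fin_supp_iff: "x \<in> fin_supp A \<longleftrightarrow> finite {w. x w \<noteq> 0} \<and> (\<forall>w. x w \<noteq> 0 \<longrightarrow> w \<in> A)"
  by (auto simp: fin_supp_def supp_def)

lemma fin_supp_zero [simp, intro]: "(\<lambda>w. 0) \<in> fin_supp A"
  by (simp add: fin_supp_iff)

lemma fin_supp_add [intro]:
  assumes "x \<in> fin_supp A" "y \<in> fin_supp A"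
  shows "(\<lambda>w. x w + y w) \<in> fin_supp A"
proof -
  have "supp (\<lambda>w. x w + y w) \<subseteq> supp x \<union> supp y" by (auto simp: supp_def)
  then show ?thesis using assms unfolding fin_supp_def by (auto intro: finite_subset)
qed

lemma fin_supp_smul [intro]: "x \<in> fin_supp A \<Longrightarrow> (\<lambda>w. c * x w) \<in> fin_supp A"
  unfolding fin_supp_def supp_def by (auto elim!: finite_subset[rotated])

lemma fin_supp_delta [intro]: "w \<in> A \<Longrightarrow> delta w \<in> fin_supp A"
  by (auto simp: fin_supp_iff delta_def)

lemma fin_supp_mono: "x \<in> fin_supp A \<Longrightarrow> A \<subseteq> B \<Longrightarrow> x \<in> fin_supp B"
  by (auto simp: fin_supp_def)

lemma qvs_permmod: "qvs (permmod \<Omega> \<alpha>)"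
proof -
  have "(\<lambda>w. - x w) \<in> fin_supp \<Omega>" if "x \<in> fin_supp \<Omega>" for x
    using fin_supp_smul[OF that, of "-1"] by simp
  then show ?thesis
    unfolding qvs_def permmod_simps
    by (auto simp: fun_eq_iff algebra_simps intro!: bexI[where x = "\<lambda>w. - _ w"])
qed

lemma l1norm_eq_sum: "finite A \<Longrightarrow> supp x \<subseteq> A \<Longrightarrow> l1norm x = real_of_rat (\<Sum>w\<in>A. \<bar>x w\<bar>)"
  unfolding l1norm_def
  by (rule arg_cong[where f = real_of_rat], rule sum.mono_neutral_left) (auto simp: supp_def)

lemma l1norm_nonneg [simp]: "0 \<le> l1norm x"
  unfolding l1norm_def by (simp add: sum_nonneg zero_le_of_rat_iff)

lemma l1norm_zero [simp]: "l1norm (\<lambda>w. 0) = 0"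
  unfolding l1norm_def by simp

lemma l1norm_add_le:
  assumes "finite (supp x)" "finite (supp y)"
  shows "l1norm (\<lambda>w. x w + y w) \<le> l1norm x + l1norm y"
proof -
  let ?A = "supp x \<union> supp y"
  have A: "finite ?A" using assms by simp
  have "l1norm (\<lambda>w. x w + y w) = real_of_rat (\<Sum>w\<in>?A. \<bar>x w + y w\<bar>)"
    by (rule l1norm_eq_sum[OF A]) (auto simp: supp_def)
  also have "\<dots> \<le> real_of_rat (\<Sum>w\<in>?A. \<bar>x w\<bar> + \<bar>y w\<bar>)"
    unfolding of_rat_less_eq by (rule sum_mono, rule abs_triangle_ineq)
  also have "\<dots> = l1norm x + l1norm y"
    using l1norm_eq_sum[OF A, of x] l1norm_eq_sum[OF A, of y] by (simp add: sum.distrib of_rat_add)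
  finally show ?thesis .
qed

lemma l1norm_smul:
  assumes "finite (supp x)"
  shows "l1norm (\<lambda>w. c * x w) = real_of_rat \<bar>c\<bar> * l1norm x"
  using l1norm_eq_sum[OF assms, of "\<lambda>w. c * x w"] l1norm_eq_sum[OF assms, of x]
  by (auto simp: supp_def abs_mult sum_distrib_left[symmetric] of_rat_mult)

lemma l1norm_fun_upd_zero:
  assumes "finite (supp x)"
  shows "l1norm x = l1norm (x(w := 0)) + real_of_rat \<bar>x w\<bar>"
proof -
  let ?A = "insert w (supp x)"
  have A: "finite ?A" using assms by simp
  have "supp x \<subseteq> ?A" "supp (x(w := 0)) \<subseteq> ?A" by (auto simp: supp_def)
  moreover have "(\<Sum>u\<in>?A. \<bar>x u\<bar>) = (\<Sum>u\<in>?A. \<bar>(x(w := 0)) u\<bar>) + \<bar>x w\<bar>"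
    using A by (simp add: sum.insert_remove sum.remove)
  ultimately show ?thesis
    using l1norm_eq_sum[OF A] by (metis of_rat_add)
qed

definition group_action :: "'g::group_add set \<Rightarrow> 'w set \<Rightarrow> ('g \<Rightarrow> 'w \<Rightarrow> 'w) \<Rightarrow> bool" where
  "group_action S \<Omega> \<alpha> \<longleftrightarrow> (\<forall>g\<in>S. - g \<in> S) \<and> (\<forall>g\<in>S. \<forall>w\<in>\<Omega>. \<alpha> g w \<in> \<Omega>) \<and>
     (\<forall>w\<in>\<Omega>. \<alpha> 0 w = w) \<and> (\<forall>g\<in>S. \<forall>h\<in>S. \<forall>w\<in>\<Omega>. \<alpha> (g + h) w = \<alpha> g (\<alpha> h w))"

lemma group_action_proper_gset:
  "proper_gset S \<Omega> \<alpha> \<Longrightarrow> \<forall>g\<in>S. - g \<in> S \<Longrightarrow> group_action S \<Omega> \<alpha>"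
  unfolding group_action_def proper_gset_def by blast

lemma group_action_subset:
  "group_action S \<Omega> \<alpha> \<Longrightarrow> H \<subseteq> S \<Longrightarrow> \<forall>h\<in>H. - h \<in> H \<Longrightarrow> group_action H \<Omega> \<alpha>"
  unfolding group_action_def by blast

lemma filling_presD:
  assumes "filling_pres S \<Omega> \<alpha> M d" and "\<forall>g\<in>S. - g \<in> S"
  shows "dhom S (permmod \<Omega> \<alpha>) M d" "d ` fin_supp \<Omega> = gcarrier M"
    "group_action S \<Omega> \<alpha>" "finite_orbits S \<Omega> \<alpha>"
  using assms group_action_proper_gset unfolding filling_pres_def by auto

context
  fixes S \<Omega> \<alpha>
  assumes act: "group_action S \<Omega> \<alpha>"
begin

lemma action_closed: "g \<in> S \<Longrightarrow> w \<in> \<Omega> \<Longrightarrow> \<alpha> g w \<in> \<Omega>"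
  using act unfolding group_action_def by blast

lemma action_add: "g \<in> S \<Longrightarrow> h \<in> S \<Longrightarrow> w \<in> \<Omega> \<Longrightarrow> \<alpha> (g + h) w = \<alpha> g (\<alpha> h w)"
  using act unfolding group_action_def by blast

lemma action_neg_cancel: "g \<in> S \<Longrightarrow> w \<in> \<Omega> \<Longrightarrow> \<alpha> (- g) (\<alpha> g w) = w"
  using act action_add[of "- g" g w] unfolding group_action_def by fastforce

lemma action_cancel_neg: "g \<in> S \<Longrightarrow> w \<in> \<Omega> \<Longrightarrow> \<alpha> g (\<alpha> (- g) w) = w"
  using act action_neg_cancel[of "- g" w] unfolding group_action_def by simp

lemma perm_act_delta: "g \<in> S \<Longrightarrow> w \<in> \<Omega> \<Longrightarrow> perm_act \<Omega> \<alpha> g (delta w) = delta (\<alpha> g w)"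
  unfolding perm_act_def delta_def fun_eq_iff
  using act action_neg_cancel action_cancel_neg action_closed unfolding group_action_def by metis

lemma supp_perm_act: "g \<in> S \<Longrightarrow> x \<in> fin_supp \<Omega> \<Longrightarrow> supp (perm_act \<Omega> \<alpha> g x) = \<alpha> g ` supp x"
  unfolding fin_supp_def supp_def perm_act_def
  using act action_neg_cancel action_cancel_neg action_closed unfolding group_action_def
  by (auto simp: image_iff) metis+

lemma perm_act_fin_supp: "g \<in> S \<Longrightarrow> x \<in> fin_supp \<Omega> \<Longrightarrow> perm_act \<Omega> \<alpha> g x \<in> fin_supp \<Omega>"
  using supp_perm_act action_closed unfolding fin_supp_def by fastforce

lemma l1norm_perm_act: "g \<in> S \<Longrightarrow> x \<in> fin_supp \<Omega> \<Longrightarrow> l1norm (perm_act \<Omega> \<alpha> g x) = l1norm x"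
proof -
  assume g: "g \<in> S" and x: "x \<in> fin_supp \<Omega>"
  have inj: "inj_on (\<alpha> g) (supp x)"
    by (rule inj_on_inverseI[where g = "\<alpha> (- g)"]) (use x action_neg_cancel[OF g] in \<open>auto simp: fin_supp_def\<close>)
  have "l1norm (perm_act \<Omega> \<alpha> g x) = real_of_rat (\<Sum>u\<in>\<alpha> g ` supp x. \<bar>perm_act \<Omega> \<alpha> g x u\<bar>)"
    using x supp_perm_act[OF g x] by (intro l1norm_eq_sum) (auto simp: fin_supp_def)
  also have "\<dots> = real_of_rat (\<Sum>w\<in>supp x. \<bar>x w\<bar>)"
    using x action_closed[OF g] action_neg_cancel[OF g]
    by (simp add: sum.reindex[OF inj] perm_act_def fin_supp_def subset_iff)
  also have "\<dots> = l1norm x" by (simp add: l1norm_def supp_def)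
  finally show ?thesis .
qed

end

section \<open>Bounded lifts along linear maps out of permutation modules\<close>

definition qlinear :: "'w set \<Rightarrow> ('g, 'm) gmod \<Rightarrow> (('w \<Rightarrow> rat) \<Rightarrow> 'm) \<Rightarrow> bool" where
  "qlinear A Q T \<longleftrightarrow> (\<forall>x\<in>fin_supp A. T x \<in> gcarrier Q) \<and>
     (\<forall>x\<in>fin_supp A. \<forall>y\<in>fin_supp A. T (\<lambda>w. x w + y w) = gadd Q (T x) (T y)) \<and>
     (\<forall>c. \<forall>x\<in>fin_supp A. T (\<lambda>w. c * x w) = gsmul Q c (T x))"

lemma qlinearD:
  assumes "qlinear A Q T"
  shows "x \<in> fin_supp A \<Longrightarrow> T x \<in> gcarrier Q"
    "x \<in> fin_supp A \<Longrightarrow> y \<in> fin_supp A \<Longrightarrow> T (\<lambda>w. x w + y w) = gadd Q (T x) (T y)"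
    "x \<in> fin_supp A \<Longrightarrow> T (\<lambda>w. c * x w) = gsmul Q c (T x)"
  using assms by (simp_all add: qlinear_def)

lemma qlinear_zero: "qvs Q \<Longrightarrow> qlinear A Q T \<Longrightarrow> T (\<lambda>w. 0) = gzero Q"
  using qlinearD(3)[of A Q T "\<lambda>w. 0" 0] qlinearD(1)[of A Q T "\<lambda>w. 0"] by simp

lemma qlinear_subset: "qlinear A Q T \<Longrightarrow> B \<subseteq> A \<Longrightarrow> qlinear B Q T"
  unfolding qlinear_def by (simp add: fin_supp_mono)

lemma dhom_qlinear: "dhom S (permmod A \<alpha>) Q f \<Longrightarrow> qlinear A Q f"
  unfolding dhom_def qlinear_def by simp

lemma dhom_delta_equivariant:
  assumes "dhom S (permmod \<Omega> \<alpha>) Q f" "group_action S \<Omega> \<alpha>" "g \<in> S" "v \<in> \<Omega>"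
  shows "f (delta (\<alpha> g v)) = gact Q g (f (delta v))"
proof -
  have "delta (\<alpha> g v) = perm_act \<Omega> \<alpha> g (delta v)" using perm_act_delta[OF assms(2-4)] by simp
  then show ?thesis using assms(1,3) fin_supp_delta[OF assms(4)] unfolding dhom_def by simp
qed

lemma dhom_comp: "dhom S A B f \<Longrightarrow> dhom S B C g \<Longrightarrow> dhom S A C (g \<circ> f)"
  unfolding dhom_def by simp

lemma dhom_restrict:
  "dhom S M P f \<Longrightarrow> H \<subseteq> S \<Longrightarrow> N \<subseteq> gcarrier M \<Longrightarrow> dhom H (M\<lparr>gcarrier := N\<rparr>) P f"
  unfolding dhom_def by (simp add: subset_iff)

lemma dhom_subset: "dhom S M P f \<Longrightarrow> H \<subseteq> S \<Longrightarrow> dhom H M P f"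
  unfolding dhom_def by blast

lemma dhom_into_subspace: "dhom S A (M\<lparr>gcarrier := N\<rparr>) f \<Longrightarrow> N \<subseteq> gcarrier M \<Longrightarrow> dhom S A M f"
  unfolding dhom_def by auto

lemma dhom_zero:
  assumes qvs: "qvs M" "qvs P" and f: "dhom S M P f"
  shows "f (gzero M) = gzero P"
proof -
  have "f (gsmul M 0 (gzero M)) = gsmul P 0 (f (gzero M))"
    using f qvs(1) unfolding dhom_def by blast
  then show ?thesis using f qvs unfolding dhom_def by simp
qed

lemma qlinear_lift_fun_upd:
  assumes Q: "qvs Q" and T: "qlinear A Q T" and D: "qlinear B Q D" and C: "0 \<le> C"
    and x: "x \<in> fin_supp A" and w: "w \<in> A"
    and y': "y' \<in> fin_supp B" "D y' = T (x(w := 0))" "l1norm y' \<le> C * l1norm (x(w := 0))"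
    and yw: "yw \<in> fin_supp B" "D yw = T (delta w)" "l1norm yw \<le> C"
  shows "\<exists>y\<in>fin_supp B. D y = T x \<and> l1norm y \<le> C * l1norm x"
proof
  let ?x' = "x(w := 0)" and ?y = "\<lambda>u. y' u + x w * yw u"
  have x': "?x' \<in> fin_supp A"
    using x by (auto simp: fin_supp_def supp_def elim: finite_subset[rotated])
  show "?y \<in> fin_supp B" using y' yw by auto
  have "T x = T (\<lambda>u. ?x' u + x w * delta w u)"
    by (rule arg_cong[where f = T]) (auto simp: delta_def)
  also have "\<dots> = gadd Q (T ?x') (gsmul Q (x w) (T (delta w)))"
    using qlinearD(2)[OF T x' fin_supp_smul[OF fin_supp_delta[OF w]]]
      qlinearD(3)[OF T fin_supp_delta[OF w]] by simp
  also have "\<dots> = D ?y"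
    using y' yw qlinearD[OF D] by (simp add: fin_supp_smul)
  finally have "D ?y = T x" ..
  moreover have "l1norm ?y \<le> C * l1norm x"
  proof -
    have fin: "finite (supp y')" "finite (supp yw)" using y' yw by (auto simp: fin_supp_def)
    have "l1norm ?y \<le> l1norm y' + real_of_rat \<bar>x w\<bar> * l1norm yw"
      using l1norm_add_le[OF fin(1), of "\<lambda>u. x w * yw u"]
        fin_supp_smul[OF yw(1), of "x w"] l1norm_smul[OF fin(2)]
      by (simp add: fin_supp_def)
    also have "\<dots> \<le> C * l1norm ?x' + real_of_rat \<bar>x w\<bar> * C"
      using y'(3) yw(3) by (intro add_mono mult_left_mono) (auto simp: zero_le_of_rat_iff)
    also have "\<dots> = C * l1norm x"
      using l1norm_fun_upd_zero[of x w] x by (simp add: fin_supp_def algebra_simps)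
    finally show ?thesis .
  qed
  ultimately show "D ?y = T x \<and> l1norm ?y \<le> C * l1norm x" by blast
qed

lemma qlinear_lift_bounded:
  assumes Q: "qvs Q" and T: "qlinear A Q T" and D: "qlinear B Q D" and C: "0 \<le> C"
    and lifts: "\<forall>w\<in>A. \<exists>y\<in>fin_supp B. D y = T (delta w) \<and> l1norm y \<le> C"
    and x: "x \<in> fin_supp A"
  shows "\<exists>y\<in>fin_supp B. D y = T x \<and> l1norm y \<le> C * l1norm x"
proof -
  have "\<exists>y\<in>fin_supp B. D y = T x \<and> l1norm y \<le> C * l1norm x"
    if "finite F" "x \<in> fin_supp A" "supp x \<subseteq> F" for F x
    using that
  proof (induction F arbitrary: x rule: finite_induct)
    case empty
    then have "x = (\<lambda>w. 0)" by (auto simp: supp_def)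
    then show ?case
      using qlinear_zero[OF Q T] qlinear_zero[OF Q D] by (intro bexI[of _ "\<lambda>w. 0"]) auto
  next
    case (insert w F)
    have x': "x(w := 0) \<in> fin_supp A" "supp (x(w := 0)) \<subseteq> F"
      using insert.prems by (auto simp: fin_supp_def supp_def elim: finite_subset[rotated])
    obtain y' where y': "y' \<in> fin_supp B" "D y' = T (x(w := 0))"
        "l1norm y' \<le> C * l1norm (x(w := 0))"
      using insert.IH[OF x'] by blast
    show ?case
    proof (cases "x w = 0")
      case True
      then show ?thesis using y' fun_upd_idem[of x w 0] by auto
    next
      case False
      then have w: "w \<in> A" using insert.prems by (auto simp: fin_supp_def supp_def)
      then obtain yw where "yw \<in> fin_supp B" "D yw = T (delta w)" "l1norm yw \<le> C"
        using lifts by blast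
      then show ?thesis using qlinear_lift_fun_upd[OF Q T D C insert.prems(1) w y'] by blast
    qed
  qed
  then show ?thesis using x by (auto simp: fin_supp_def)
qed

text \<open>Lifting the finitely many orbit representatives \<open>delta v\<close> suffices: translates of a
  lift are lifts of the translates, with the same \<open>\<ell>\<^sub>1\<close>-norm.\<close>
lemma dhom_lift_bounded:
  assumes Q: "qvs Q" and act_A: "group_action S A \<alpha>" and act_B: "group_action S B \<beta>"
    and F: "finite F" "F \<subseteq> A"
    and T: "dhom S (permmod A \<alpha>) Q T" and D: "dhom S (permmod B \<beta>) Q D"
    and lifts: "\<forall>v\<in>F. T (delta v) \<in> D ` fin_supp B"
  obtains C where "0 < C"
    "\<forall>x\<in>fin_supp {\<alpha> g v | g v. g \<in> S \<and> v \<in> F}. \<exists>y\<in>fin_supp B. D y = T x \<and> l1norm y \<le> C * l1norm x"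
proof -
  let ?A = "{\<alpha> g v | g v. g \<in> S \<and> v \<in> F}"
  define Y where "Y v = (SOME y. y \<in> fin_supp B \<and> D y = T (delta v))" for v
  have lift_ex: "\<exists>y. y \<in> fin_supp B \<and> D y = T (delta v)" if "v \<in> F" for v
    using lifts that by (metis imageE)
  have Y: "Y v \<in> fin_supp B \<and> D (Y v) = T (delta v)" if "v \<in> F" for v
    unfolding Y_def by (rule someI_ex[OF lift_ex[OF that]])
  define C where "C = 1 + (\<Sum>v\<in>F. l1norm (Y v))"
  have C: "0 < C" unfolding C_def by (simp add: sum_nonneg add_pos_nonneg)
  have orbit_lifts: "\<forall>w\<in>?A. \<exists>y\<in>fin_supp B. D y = T (delta w) \<and> l1norm y \<le> C"
  proof
    fix w assume "w \<in> ?A"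
    then obtain g v where gv: "g \<in> S" "v \<in> F" "w = \<alpha> g v" by blast
    have Yv: "Y v \<in> fin_supp B" "D (Y v) = T (delta v)" using Y[OF gv(2)] by auto
    have "D (perm_act B \<beta> g (Y v)) = gact Q g (D (Y v))"
      using D gv(1) Yv(1) unfolding dhom_def by simp
    also have "\<dots> = T (delta w)"
      using Yv(2) dhom_delta_equivariant[OF T act_A gv(1) subsetD[OF F(2) gv(2)]] by (simp add: gv(3))
    finally have "D (perm_act B \<beta> g (Y v)) = T (delta w)" .
    moreover have "l1norm (perm_act B \<beta> g (Y v)) \<le> C"
      using l1norm_perm_act[OF act_B gv(1) Yv(1)] member_le_sum[of v F "\<lambda>v. l1norm (Y v)"] gv(2) F(1)
      unfolding C_def by simp
    ultimately show "\<exists>y\<in>fin_supp B. D y = T (delta w) \<and> l1norm y \<le> C"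
      using perm_act_fin_supp[OF act_B gv(1) Yv(1)] by blast
  qed
  have "qlinear ?A Q T"
    by (rule qlinear_subset[OF dhom_qlinear[OF T]]) (use F(2) action_closed[OF act_A] in auto)
  from qlinear_lift_bounded[OF Q this dhom_qlinear[OF D] less_imp_le[OF C] orbit_lifts]
  show thesis by (intro that[OF C] ballI)
qed

lemma dhom_permmod_bounded:
  assumes act_A: "group_action S A \<alpha>" and act_B: "group_action S B \<beta>"
    and orbits: "finite_orbits S A \<alpha>" and T: "dhom S (permmod A \<alpha>) (permmod B \<beta>) T"
  obtains C where "0 < C" "\<forall>x\<in>fin_supp A. l1norm (T x) \<le> C * l1norm x"
proof -
  obtain F where F: "finite F" "F \<subseteq> A" "A = {\<alpha> g v | g v. g \<in> S \<and> v \<in> F}"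
    using orbits unfolding finite_orbits_def by blast
  have id: "dhom S (permmod B \<beta>) (permmod B \<beta>) id" by (simp add: dhom_def)
  have T_delta: "T (delta v) \<in> fin_supp B" if "v \<in> F" for v
    using T fin_supp_delta[of v A] that F(2) unfolding dhom_def by auto
  then have lifts: "\<forall>v\<in>F. T (delta v) \<in> id ` fin_supp B" by simp
  obtain C where "0 < C" "\<forall>x\<in>fin_supp A. \<exists>y\<in>fin_supp B. id y = T x \<and> l1norm y \<le> C * l1norm x"
    by (rule dhom_lift_bounded[OF qvs_permmod act_A act_B F(1,2) T id lifts, folded F(3)])
  then show thesis using that by auto
qed

section \<open>Discreteness of permutation modules and sections of presentations\<close>

lemma tdlc_group_translation_continuous:
  assumes "tdlc_group TYPE('g::{group_add, t2_space})"
  shows "continuous_on UNIV (\<lambda>g::'g. a + g)"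
proof -
  have "continuous_on UNIV (\<lambda>p :: 'g \<times> 'g. fst p + snd p)"
    using assms unfolding tdlc_group_def by blast
  from continuous_on_compose2[OF this, of UNIV "\<lambda>g. (a, g)"] show ?thesis
    by (simp add: continuous_on_Pair)
qed

lemma closed_subgroupD:
  assumes "closed_subgroup H"
  shows "0 \<in> H" "\<forall>h\<in>H. - h \<in> H" "\<forall>g\<in>H. \<forall>h\<in>H. g + h \<in> H"
proof -
  show H0: "0 \<in> H" using assms unfolding closed_subgroup_def by blast
  have diff: "x - y \<in> H" if "x \<in> H" "y \<in> H" for x y
    using assms that unfolding closed_subgroup_def by blast
  show neg: "\<forall>h\<in>H. - h \<in> H" using diff[OF H0] by simp
  show "\<forall>g\<in>H. \<forall>h\<in>H. g + h \<in> H" using diff neg by (metis diff_minus_eq_add)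
qed

text \<open>An additively closed set containing a neighbourhood of \<open>0\<close> contains the translate
  of that neighbourhood by each of its points.\<close>
lemma open_if_add_closed_nhd_zero:
  fixes K U :: "'g::{group_add, topological_space} set"
  assumes transl: "\<And>a::'g. continuous_on UNIV (\<lambda>g. a + g)"
    and U: "open U" "0 \<in> U" "U \<subseteq> K"
    and add_closed: "\<And>g h. g \<in> K \<Longrightarrow> h \<in> K \<Longrightarrow> g + h \<in> K"
  shows "open K"
proof (subst open_subopen, intro ballI)
  fix k assume k: "k \<in> K"
  let ?V = "(\<lambda>g. - k + g) -` U"
  have "open ?V" using open_vimage[OF U(1) transl[of "- k"]] by simp
  moreover have "k \<in> ?V" using U(2) by simp
  moreover have "?V \<subseteq> K"
  proof
    fix g assume "g \<in> ?V"
    then have "k + (- k + g) \<in> K" using U(3) add_closed k by blast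
    then show "g \<in> K" by (simp add: add.assoc[symmetric])
  qed
  ultimately show "\<exists>V. open V \<and> k \<in> V \<and> V \<subseteq> K" by blast
qed

context
  fixes S \<Omega> \<alpha>
  assumes act: "group_action S \<Omega> \<alpha>"
begin

lemma perm_act_zero: "x \<in> fin_supp \<Omega> \<Longrightarrow> perm_act \<Omega> \<alpha> 0 x = x"
  using act unfolding group_action_def perm_act_def fin_supp_iff fun_eq_iff by auto

lemma perm_act_add:
  assumes "g \<in> S" "h \<in> S"
  shows "perm_act \<Omega> \<alpha> (g + h) x = perm_act \<Omega> \<alpha> g (perm_act \<Omega> \<alpha> h x)"
proof -
  have "\<alpha> (- (g + h)) w = \<alpha> (- h) (\<alpha> (- g) w)" if "w \<in> \<Omega>" for w
    using action_add[OF act, of "- h" "- g" w] act assms that unfolding group_action_def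
    by (simp add: minus_add)
  then show ?thesis
    using act assms unfolding group_action_def perm_act_def by (auto simp: fun_eq_iff)
qed

lemma perm_act_fixed:
  assumes g: "g \<in> S" and x: "x \<in> fin_supp \<Omega>" and fixes_supp: "\<forall>w\<in>supp x. \<alpha> g w = w"
  shows "perm_act \<Omega> \<alpha> g x = x"
proof (rule ext)
  fix u
  show "perm_act \<Omega> \<alpha> g x u = x u"
  proof (cases "u \<in> \<Omega>")
    case True
    have neg_fixes: "\<alpha> (- g) w = w" if "w \<in> supp x" for w
      using action_neg_cancel[OF act g, of w] fixes_supp that x by (auto simp: fin_supp_def)
    have "x (\<alpha> (- g) u) = x u"
    proof (cases "\<alpha> (- g) u \<in> supp x")
      case True
      then show ?thesis
        using fixes_supp action_cancel_neg[OF act g \<open>u \<in> \<Omega>\<close>] by metis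
    next
      case False
      then have "u \<notin> supp x" using neg_fixes by metis
      with False show ?thesis by (simp add: supp_def)
    qed
    then show ?thesis using True by (simp add: perm_act_def)
  next
    case False
    then show ?thesis using x by (auto simp: perm_act_def fin_supp_iff)
  qed
qed

end

lemma dmod_permmod:
  fixes \<alpha> :: "'g::{group_add, topological_space} \<Rightarrow> 'w \<Rightarrow> 'w"
  assumes transl: "\<And>a::'g. continuous_on UNIV (\<lambda>g. a + g)" and P: "proper_gset UNIV \<Omega> \<alpha>"
  shows "dmod UNIV (permmod \<Omega> \<alpha>)"
proof -
  have act: "group_action UNIV \<Omega> \<alpha>" using group_action_proper_gset[OF P] by simp
  have "open {g. perm_act \<Omega> \<alpha> g x = x}" if x: "x \<in> fin_supp \<Omega>" for x
  proof (rule open_if_add_closed_nhd_zero[OF transl])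
    let ?U = "\<Inter>w\<in>supp x. {g. \<alpha> g w = w}"
    show "open ?U"
      using x P by (intro open_INT) (auto simp: fin_supp_def proper_gset_def)
    show "0 \<in> ?U" using x act by (auto simp: fin_supp_def group_action_def)
    show "?U \<subseteq> {g. perm_act \<Omega> \<alpha> g x = x}" using perm_act_fixed[OF act _ x] by blast
  qed (simp add: perm_act_add[OF act])
  then show ?thesis
    unfolding dmod_def permmod_simps
    using qvs_permmod perm_act_fin_supp[OF act] perm_act_zero[OF act] perm_act_add[OF act]
    by (simp add: perm_act_def fun_eq_iff algebra_simps)
qed

definition transport :: "('g, 'm) gmod \<Rightarrow> ('m \<Rightarrow> 'b) \<Rightarrow> ('g, 'b) gmod" where
  "transport M e = \<lparr> gcarrier = e ` gcarrier M,
     gadd = (\<lambda>a b. e (gadd M (inv_into (gcarrier M) e a) (inv_into (gcarrier M) e b))),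
     gzero = e (gzero M),
     gsmul = (\<lambda>c a. e (gsmul M c (inv_into (gcarrier M) e a))),
     gact = (\<lambda>g a. e (gact M g (inv_into (gcarrier M) e a))) \<rparr>"

lemma transport_simps [simp]:
  assumes inj: "inj_on e (gcarrier M)"
  shows
  "gcarrier (transport M e) = e ` gcarrier M"
  "m \<in> gcarrier M \<Longrightarrow> n \<in> gcarrier M \<Longrightarrow> gadd (transport M e) (e m) (e n) = e (gadd M m n)"
  "gzero (transport M e) = e (gzero M)"
  "m \<in> gcarrier M \<Longrightarrow> gsmul (transport M e) c (e m) = e (gsmul M c m)"
  "m \<in> gcarrier M \<Longrightarrow> gact (transport M e) g (e m) = e (gact M g m)"
  using inj by (simp_all add: transport_def inv_into_f_f)
lemma qvs_transport:
  assumes Q: "qvs M" and inj: "inj_on e (gcarrier M)"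
  shows "qvs (transport M e)"
proof -
  have "\<forall>x\<in>gcarrier M. \<exists>y\<in>gcarrier M. gadd (transport M e) (e x) (e y) = e (gzero M)"
    using qvs_add_inverse[OF Q] inj by force
  then show ?thesis
    unfolding qvs_def[of "transport M e"]
    by (simp add: Q inj qvs_add_assoc[OF Q] qvs_smul_add_left[OF Q] qvs_smul_add_right[OF Q]
        qvs_smul_smul[OF Q]) (metis qvs_add_commute[OF Q])
qed
lemma dmod_transport:
  assumes M: "dmod S M" and inj: "inj_on e (gcarrier M)"
  shows "dmod S (transport M e)"
proof -
  have Q: "qvs M" using M by (simp add: dmod_def)
  have act: "gact M g m \<in> gcarrier M" if "g \<in> S" "m \<in> gcarrier M" for g m
    using M that by (simp add: dmod_def)
  have "{g \<in> S. e (gact M g m) = e m} = {g \<in> S. gact M g m = m}" if "m \<in> gcarrier M" for m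
    using that act inj by (auto simp: inj_on_eq_iff)
  then show ?thesis
    using M qvs_transport[OF Q inj] act inj unfolding dmod_def by simp
qed
lemma dhom_transport:
  assumes M: "dmod S M" and inj: "inj_on e (gcarrier M)"
  shows "dhom S M (transport M e) e"
  using M inj unfolding dhom_def dmod_def by simp
lemma dhom_transport_inv:
  assumes M: "dmod S M" and inj: "inj_on e (gcarrier M)"
  shows "dhom S (transport M e) M (inv_into (gcarrier M) e)"
  using M inj unfolding dhom_def dmod_def by simp

lemma finite_orbits_inj:
  fixes \<alpha> :: "'g \<Rightarrow> 'w \<Rightarrow> 'w"
  assumes "finite_orbits S \<Omega> \<alpha>"
  obtains j :: "'w \<Rightarrow> 'g \<times> nat" where "inj_on j \<Omega>"
proof -
  obtain F where F: "finite F" "\<Omega> = {\<alpha> g w | g w. g \<in> S \<and> w \<in> F}"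
    using assms unfolding finite_orbits_def by blast
  obtain i :: "'w \<Rightarrow> nat" where i: "inj_on i F"
    using finite_imp_inj_to_nat_seg[OF F(1)] by blast
  define rep where "rep w = (SOME p. snd p \<in> F \<and> w = \<alpha> (fst p) (snd p))" for w
  have rep: "snd (rep w) \<in> F \<and> w = \<alpha> (fst (rep w)) (snd (rep w))" if "w \<in> \<Omega>" for w
    unfolding rep_def by (rule someI_ex) (use that F(2) in auto)
  have "inj_on (\<lambda>w. (fst (rep w), i (snd (rep w)))) \<Omega>"
    by (rule inj_onI) (metis (no_types, lifting) rep i inj_onD prod.inject)
  then show thesis by (rule that)
qed

text \<open>Projectivity is only tested against modules carried by \<open>'g \<times> nat \<Rightarrow> rat\<close>; it
  extends to all modules whose carriers embed into that type, by transport of structure.\<close>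
lemma dproj_lift:
  fixes A :: "('g::{group_add, topological_space}, 'a) gmod" and B :: "('g, 'b) gmod"
    and eA :: "'a \<Rightarrow> 'g \<times> nat \<Rightarrow> rat" and eB :: "'b \<Rightarrow> 'g \<times> nat \<Rightarrow> rat"
  assumes P: "dproj S M" and A: "dmod S A" and B: "dmod S B"
    and p: "dhom S A B p" and p_surj: "p ` gcarrier A = gcarrier B" and f: "dhom S M B f"
    and eA: "inj_on eA (gcarrier A)" and eB: "inj_on eB (gcarrier B)"
  obtains f' where "dhom S M A f'" "\<forall>x\<in>gcarrier M. p (f' x) = f x"
proof -
  define p' where "p' = eB \<circ> (p \<circ> inv_into (gcarrier A) eA)"
  have p': "dhom S (transport A eA) (transport B eB) p'"
    unfolding p'_def
    by (rule dhom_comp[OF dhom_comp[OF dhom_transport_inv[OF A eA] p] dhom_transport[OF B eB]])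
  have "p' ` gcarrier (transport A eA) = gcarrier (transport B eB)"
    using eA eB p_surj[symmetric] by (simp add: p'_def image_image)
  moreover have "dhom S M (transport B eB) (eB \<circ> f)"
    by (rule dhom_comp[OF f dhom_transport[OF B eB]])
  ultimately obtain g where g: "dhom S M (transport A eA) g" "\<forall>x\<in>gcarrier M. p' (g x) = eB (f x)"
    using P dmod_transport[OF A eA] dmod_transport[OF B eB] p' unfolding dproj_def by force
  show thesis
  proof (rule that)
    show hom: "dhom S M A (inv_into (gcarrier A) eA \<circ> g)"
      by (rule dhom_comp[OF g(1) dhom_transport_inv[OF A eA]])
    show "\<forall>x\<in>gcarrier M. p ((inv_into (gcarrier A) eA \<circ> g) x) = f x"
    proof
      fix x assume x: "x \<in> gcarrier M"
      have "p ((inv_into (gcarrier A) eA \<circ> g) x) \<in> gcarrier B" "f x \<in> gcarrier B"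
        using x hom p f unfolding dhom_def by auto
      moreover have "eB (p ((inv_into (gcarrier A) eA \<circ> g) x)) = eB (f x)"
        using g(2) x by (simp add: p'_def)
      ultimately show "p ((inv_into (gcarrier A) eA \<circ> g) x) = f x"
        using eB by (auto dest: inj_onD)
    qed
  qed
qed

lemma dproj_filling_section:
  fixes \<alpha> :: "'g::{group_add, topological_space} \<Rightarrow> 'w \<Rightarrow> 'w"
  assumes transl: "\<And>a::'g. continuous_on UNIV (\<lambda>g. a + g)"
    and M: "dmod UNIV M" and P: "dproj UNIV M" and pres: "filling_pres UNIV \<Omega> \<alpha> M d"
  obtains s where "dhom UNIV M (permmod \<Omega> \<alpha>) s" "\<forall>m\<in>gcarrier M. d (s m) = m"
proof -
  have proper: "proper_gset UNIV \<Omega> \<alpha>" and d: "dhom UNIV (permmod \<Omega> \<alpha>) M d"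
    and d_surj: "d ` fin_supp \<Omega> = gcarrier M" and orbits: "finite_orbits UNIV \<Omega> \<alpha>"
    using pres unfolding filling_pres_def by auto
  txt \<open>\<open>Q[\<Omega>]\<close> embeds into the test type through \<open>j\<close>, and \<open>M\<close> into \<open>Q[\<Omega>]\<close> by choosing
    preimages under \<open>d\<close>.\<close>
  obtain j :: "'w \<Rightarrow> 'g \<times> nat" where j: "inj_on j \<Omega>" using finite_orbits_inj[OF orbits] .
  define eP where "eP x = (\<lambda>p. if p \<in> j ` \<Omega> then x (inv_into \<Omega> j p) else 0)" for x :: "'w \<Rightarrow> rat"
  have eP: "inj_on eP (fin_supp \<Omega>)"
  proof (rule inj_onI, rule ext)
    fix x y w assume xy: "x \<in> fin_supp \<Omega>" "y \<in> fin_supp \<Omega>" and eq: "eP x = eP y"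
    show "x w = y w"
    proof (cases "w \<in> \<Omega>")
      case True
      then show ?thesis using fun_cong[OF eq, of "j w"] j by (simp add: eP_def)
    next
      case False
      then show ?thesis using xy unfolding fin_supp_iff by metis
    qed
  qed
  have "inj_on (inv_into (fin_supp \<Omega>) d) (gcarrier M)"
    using d_surj by (simp add: inj_on_inv_into)
  then have eM: "inj_on (eP \<circ> inv_into (fin_supp \<Omega>) d) (gcarrier M)"
    using eP d_surj by (auto intro!: comp_inj_on inj_on_subset[OF eP] inv_into_into)
  have id: "dhom UNIV M M id" using M unfolding dhom_def dmod_def by simp
  obtain s where "dhom UNIV M (permmod \<Omega> \<alpha>) s" "\<forall>m\<in>gcarrier M. d (s m) = id m"
    by (rule dproj_lift[OF P dmod_permmod[OF transl proper] M d _ id _ eM])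
      (use d_surj eP in simp_all)
  then show thesis using that by simp
qed

lemma dsubmod_vimage:
  assumes "qvs M" "qvs P" and f: "dhom S M P f" and V: "dsubmod S P V"
    and act_closed: "\<forall>g\<in>S. \<forall>x\<in>gcarrier M. gact M g x \<in> gcarrier M"
  shows "dsubmod S M {m \<in> gcarrier M. f m \<in> V}"
  using assms dsubmodD[OF V] dhom_zero[OF assms(1-3)] unfolding dsubmod_def dhom_def
  by (simp add: subset_iff)

lemma dsubmod_fin_supp:
  assumes act: "group_action S \<Omega> \<alpha>" and sub: "\<Omega>\<^sub>0 \<subseteq> \<Omega>"
    and stable: "\<forall>g\<in>S. \<forall>w\<in>\<Omega>\<^sub>0. \<alpha> g w \<in> \<Omega>\<^sub>0"
  shows "dsubmod S (permmod \<Omega> \<alpha>) (fin_supp \<Omega>\<^sub>0)"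
  unfolding dsubmod_def permmod_simps
proof (intro conjI ballI allI)
  show "fin_supp \<Omega>\<^sub>0 \<subseteq> fin_supp \<Omega>" using fin_supp_mono[OF _ sub] by blast
  fix g x assume "g \<in> S" "x \<in> fin_supp \<Omega>\<^sub>0"
  then show "perm_act \<Omega> \<alpha> g x \<in> fin_supp \<Omega>\<^sub>0"
    using supp_perm_act[OF act, of g x] fin_supp_mono[OF _ sub] stable
    by (auto simp: fin_supp_def)
qed auto

lemma dsubmod_fin_supp_orbits:
  assumes act: "group_action S \<Omega> \<alpha>" and S\<^sub>0: "S\<^sub>0 \<subseteq> \<Omega>" and S: "\<forall>g\<in>S. \<forall>h\<in>S. g + h \<in> S"
  shows "dsubmod S (permmod \<Omega> \<alpha>) (fin_supp {\<alpha> h u | h u. h \<in> S \<and> u \<in> S\<^sub>0})"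
proof (rule dsubmod_fin_supp[OF act])
  show "{\<alpha> h u | h u. h \<in> S \<and> u \<in> S\<^sub>0} \<subseteq> \<Omega>" using S\<^sub>0 action_closed[OF act] by auto
  show "\<forall>g\<in>S. \<forall>w\<in>{\<alpha> h u | h u. h \<in> S \<and> u \<in> S\<^sub>0}. \<alpha> g w \<in> {\<alpha> h u | h u. h \<in> S \<and> u \<in> S\<^sub>0}"
  proof (intro ballI)
    fix g w assume "g \<in> S" "w \<in> {\<alpha> h u | h u. h \<in> S \<and> u \<in> S\<^sub>0}"
    then obtain h u where "h \<in> S" "u \<in> S\<^sub>0" "w = \<alpha> h u" by blast
    moreover have "\<alpha> g (\<alpha> h u) = \<alpha> (g + h) u"
      using action_add[OF act \<open>g \<in> S\<close> \<open>h \<in> S\<close>] \<open>u \<in> S\<^sub>0\<close> S\<^sub>0 by auto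
    ultimately show "\<alpha> g w \<in> {\<alpha> h u | h u. h \<in> S \<and> u \<in> S\<^sub>0}" using S \<open>g \<in> S\<close> by blast
  qed
qed

lemma dfg_image_finitely_many_orbits:
  assumes N: "qvs N" "dfg S N" "\<forall>g\<in>S. \<forall>x\<in>gcarrier N. gact N g x \<in> gcarrier N"
    and s: "dhom S N (permmod \<Omega> \<alpha>) s" and act: "group_action S \<Omega> \<alpha>"
    and S: "0 \<in> S" "\<forall>g\<in>S. \<forall>h\<in>S. g + h \<in> S"
  obtains S\<^sub>0 where "finite S\<^sub>0" "S\<^sub>0 \<subseteq> \<Omega>"
    "\<forall>n\<in>gcarrier N. s n \<in> fin_supp {\<alpha> h u | h u. h \<in> S \<and> u \<in> S\<^sub>0}"
proof -
  obtain F where F: "finite F" "F \<subseteq> gcarrier N"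
    and generated: "gcarrier N = \<Inter>{W. dsubmod S N W \<and> F \<subseteq> W}"
    using N(2) unfolding dfg_def by (elim exE conjE)
  define S\<^sub>0 where "S\<^sub>0 = (\<Union>f\<in>F. supp (s f))"
  define \<Omega>\<^sub>0 where "\<Omega>\<^sub>0 = {\<alpha> h u | h u. h \<in> S \<and> u \<in> S\<^sub>0}"
  have sF: "s f \<in> fin_supp \<Omega>" if "f \<in> F" for f
    using that F(2) s unfolding dhom_def by auto
  have "finite (supp (s f)) \<and> supp (s f) \<subseteq> \<Omega>" if "f \<in> F" for f
    using sF[OF that] unfolding fin_supp_def by simp
  then have S\<^sub>0: "finite S\<^sub>0" "S\<^sub>0 \<subseteq> \<Omega>"
    unfolding S\<^sub>0_def using F(1) by (blast intro: finite_UN_I)+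
  have "dsubmod S (permmod \<Omega> \<alpha>) (fin_supp \<Omega>\<^sub>0)"
    unfolding \<Omega>\<^sub>0_def by (rule dsubmod_fin_supp_orbits[OF act S\<^sub>0(2) S(2)])
  then have W: "dsubmod S N {n \<in> gcarrier N. s n \<in> fin_supp \<Omega>\<^sub>0}"
    by (rule dsubmod_vimage[OF N(1) qvs_permmod s _ N(3)])
  have "supp (s f) \<subseteq> \<Omega>\<^sub>0" if "f \<in> F" for f
  proof
    fix u assume "u \<in> supp (s f)"
    then have u: "u \<in> S\<^sub>0" using that unfolding S\<^sub>0_def by blast
    moreover have "u = \<alpha> 0 u" using act u S\<^sub>0(2) unfolding group_action_def by auto
    ultimately show "u \<in> \<Omega>\<^sub>0" unfolding \<Omega>\<^sub>0_def using S(1) by blast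
  qed
  then have "F \<subseteq> {n \<in> gcarrier N. s n \<in> fin_supp \<Omega>\<^sub>0}"
    using F(2) sF by (auto simp: fin_supp_def)
  then have "gcarrier N \<subseteq> {n \<in> gcarrier N. s n \<in> fin_supp \<Omega>\<^sub>0}"
    using W by (subst generated) (rule Inter_lower, simp)
  then have "\<forall>n\<in>gcarrier N. s n \<in> fin_supp \<Omega>\<^sub>0" by blast
  then show thesis using that[OF S\<^sub>0] unfolding \<Omega>\<^sub>0_def by blast
qed

section \<open>Comparison of filling norms\<close>

lemma filling_inclusion_bounded:
  fixes \<alpha> :: "'g::{group_add, topological_space} \<Rightarrow> 'w \<Rightarrow> 'w" and \<beta> :: "'g \<Rightarrow> 'v \<Rightarrow> 'v"
  assumes M: "qvs M" and H_neg: "\<forall>h\<in>H. - h \<in> H"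
    and presM: "filling_pres UNIV \<Omega> \<alpha> M d"
    and presN: "filling_pres H \<Omega>' \<beta> (M\<lparr>gcarrier := N\<rparr>) d'"
    and NM: "N \<subseteq> gcarrier M"
  obtains C where "0 < C" "\<forall>y\<in>fin_supp \<Omega>'. \<exists>x\<in>fin_supp \<Omega>. d x = d' y \<and> l1norm x \<le> C * l1norm y"
proof -
  note d = filling_presD[OF presM, simplified]
  note d' = filling_presD[OF presN H_neg, simplified]
  have act: "group_action H \<Omega> \<alpha>" by (rule group_action_subset[OF d(3) subset_UNIV H_neg])
  obtain F where F: "finite F" "F \<subseteq> \<Omega>'" "\<Omega>' = {\<beta> g v | g v. g \<in> H \<and> v \<in> F}"
    using d'(4) unfolding finite_orbits_def by blast
  have lifts: "\<forall>v\<in>F. d' (delta v) \<in> d ` fin_supp \<Omega>"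
    using d'(2) d(2) NM F(2) fin_supp_delta by blast
  show thesis
    by (rule dhom_lift_bounded[OF M d'(3) act F(1,2) dhom_into_subspace[OF d'(1) NM]
          dhom_subset[OF d(1) subset_UNIV] lifts, folded F(3)]) (rule that)
qed

lemma direct_summand_filling_bounded:
  fixes \<alpha> :: "'g::{group_add, topological_space} \<Rightarrow> 'w \<Rightarrow> 'w" and \<beta> :: "'g \<Rightarrow> 'v \<Rightarrow> 'v"
  assumes transl: "\<And>a::'g. continuous_on UNIV (\<lambda>g. a + g)"
    and H: "0 \<in> H" "\<forall>h\<in>H. - h \<in> H" "\<forall>g\<in>H. \<forall>h\<in>H. g + h \<in> H"
    and M: "dmod UNIV M" "dproj UNIV M" and pres_M: "filling_pres UNIV \<Omega> \<alpha> M d"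
    and N: "dsubmod H M N" "dfg H (M\<lparr>gcarrier := N\<rparr>)"
    and K: "dsubmod H M K" "N \<inter> K = {gzero M}" "\<forall>x\<in>gcarrier M. \<exists>a\<in>N. \<exists>b\<in>K. x = gadd M a b"
    and pres_N: "filling_pres H \<Omega>' \<beta> (M\<lparr>gcarrier := N\<rparr>) d'"
  obtains C where "0 < C"
    "\<forall>x\<in>fin_supp \<Omega>. d x \<in> N \<longrightarrow> (\<exists>y\<in>fin_supp \<Omega>'. d' y = d x \<and> l1norm y \<le> C * l1norm x)"
proof -
  have Q: "qvs M" using M(1) by (simp add: dmod_def)
  have NM: "N \<subseteq> gcarrier M" using dsubmodD(1)[OF N(1)] .
  note presM = filling_presD[OF pres_M, simplified]
  note presN = filling_presD[OF pres_N H(2), simplified]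
  have d: "dhom UNIV (permmod \<Omega> \<alpha>) M d" and act: "group_action UNIV \<Omega> \<alpha>"
    and d': "dhom H (permmod \<Omega>' \<beta>) M d'" and d'_surj: "d' ` fin_supp \<Omega>' = N"
    and act': "group_action H \<Omega>' \<beta>"
    using presM presN dhom_into_subspace[OF _ NM] by auto
  have act_H: "group_action H \<Omega> \<alpha>" by (rule group_action_subset[OF act subset_UNIV H(2)])
  obtain s where s: "dhom UNIV M (permmod \<Omega> \<alpha>) s" "\<forall>m\<in>gcarrier M. d (s m) = m"
    using dproj_filling_section[OF transl M(1,2) pres_M] by blast
  define \<pi> where "\<pi> = summand_proj M N K"
  have \<pi>: "dhom H M M \<pi>" "\<forall>m\<in>gcarrier M. \<pi> m \<in> N" "\<forall>n\<in>N. \<pi> n = n"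
    unfolding \<pi>_def using summand_proj_in[OF Q N(1) K] summand_proj_id[OF Q N(1) K]
      dhom_summand_proj[OF Q N(1) K] M(1) by (simp_all add: dmod_def)
  obtain S\<^sub>0 where S\<^sub>0: "finite S\<^sub>0" "S\<^sub>0 \<subseteq> \<Omega>"
    and s_N: "\<forall>n\<in>N. s n \<in> fin_supp {\<alpha> h u | h u. h \<in> H \<and> u \<in> S\<^sub>0}"
    using dfg_image_finitely_many_orbits[OF qvs_subspace[OF Q N(1)] N(2) _
        dhom_restrict[OF s(1) _ NM] act_H H(1,3)] dsubmodD(5)[OF N(1)] by auto
  obtain C\<^sub>1 where C\<^sub>1: "0 < C\<^sub>1" "\<forall>x\<in>fin_supp \<Omega>. l1norm ((s \<circ> d) x) \<le> C\<^sub>1 * l1norm x"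
    using dhom_permmod_bounded[OF act act presM(4) dhom_comp[OF d s(1)]] by blast
  let ?\<Omega>\<^sub>0 = "{\<alpha> h u | h u. h \<in> H \<and> u \<in> S\<^sub>0}"
  have \<pi>d: "dhom H (permmod \<Omega> \<alpha>) M (\<pi> \<circ> d)" by (rule dhom_comp[OF dhom_subset[OF d] \<pi>(1)]) simp
  have "\<forall>v\<in>S\<^sub>0. (\<pi> \<circ> d) (delta v) \<in> d' ` fin_supp \<Omega>'"
  proof
    fix v assume "v \<in> S\<^sub>0"
    then have "d (delta v) \<in> gcarrier M"
      using d S\<^sub>0(2) fin_supp_delta[of v \<Omega>] unfolding dhom_def by auto
    then show "(\<pi> \<circ> d) (delta v) \<in> d' ` fin_supp \<Omega>'" using \<pi>(2) d'_surj by simp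
  qed
  then obtain C\<^sub>2 where C\<^sub>2: "0 < C\<^sub>2"
    "\<forall>z\<in>fin_supp ?\<Omega>\<^sub>0. \<exists>y\<in>fin_supp \<Omega>'. d' y = (\<pi> \<circ> d) z \<and> l1norm y \<le> C\<^sub>2 * l1norm z"
    by (rule dhom_lift_bounded[OF Q act_H act' S\<^sub>0 \<pi>d d'])
  have "\<exists>y\<in>fin_supp \<Omega>'. d' y = d x \<and> l1norm y \<le> (C\<^sub>2 * C\<^sub>1) * l1norm x"
    if x: "x \<in> fin_supp \<Omega>" "d x \<in> N" for x
  proof -
    obtain y where y: "y \<in> fin_supp \<Omega>'" "d' y = (\<pi> \<circ> d) (s (d x))"
        "l1norm y \<le> C\<^sub>2 * l1norm (s (d x))"
      using C\<^sub>2(2) s_N x(2) by blast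
    have "d' y = d x" using y(2) s(2) \<pi>(3) x(2) NM by auto
    moreover have "l1norm y \<le> (C\<^sub>2 * C\<^sub>1) * l1norm x"
      using y(3) C\<^sub>1(2) x(1) C\<^sub>2(1) by (auto intro: order_trans mult_left_mono)
    ultimately show ?thesis using y(1) by blast
  qed
  then show thesis using that[of "C\<^sub>2 * C\<^sub>1"] C\<^sub>1(1) C\<^sub>2(1) by auto
qed

lemma filling_norm_nonneg:
  assumes "\<exists>x\<in>fin_supp \<Omega>. d x = n"
  shows "0 \<le> filling_norm \<Omega> \<alpha> d n"
  unfolding filling_norm_def permmod_simps using assms by (intro cInf_greatest) auto

lemma filling_norm_le_scaled:
  fixes \<alpha> :: "'g::group_add \<Rightarrow> 'w \<Rightarrow> 'w" and \<beta> :: "'g \<Rightarrow> 'v \<Rightarrow> 'v"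
  assumes fill: "\<exists>x\<in>fin_supp \<Omega>. d x = n" and C: "0 < C"
    and bound: "\<forall>x\<in>fin_supp \<Omega>. d x = n \<longrightarrow> (\<exists>y\<in>fin_supp \<Omega>'. d' y = n \<and> l1norm y \<le> C * l1norm x)"
  shows "filling_norm \<Omega>' \<beta> d' n \<le> C * filling_norm \<Omega> \<alpha> d n"
proof -
  let ?X = "{l1norm x | x. x \<in> fin_supp \<Omega> \<and> d x = n}"
  let ?Y = "{l1norm y | y. y \<in> fin_supp \<Omega>' \<and> d' y = n}"
  have "Inf ?Y / C \<le> a" if "a \<in> ?X" for a
  proof -
    obtain y where y: "y \<in> fin_supp \<Omega>'" "d' y = n" "l1norm y \<le> C * a"
      using \<open>a \<in> ?X\<close> bound by blast
    have "bdd_below ?Y" by (rule bdd_belowI[where m = 0]) auto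
    then have "Inf ?Y \<le> l1norm y" by (rule cInf_lower[rotated]) (use y in blast)
    then have "Inf ?Y \<le> C * a" using y(3) by linarith
    then show ?thesis using C by (simp add: divide_le_eq mult.commute)
  qed
  then have "Inf ?Y / C \<le> Inf ?X" using fill by (intro cInf_greatest) auto
  then show ?thesis using C by (simp add: filling_norm_def divide_le_eq mult.commute)
qed

lemma filling_norms_equivalent:
  fixes \<alpha> :: "'g::group_add \<Rightarrow> 'w \<Rightarrow> 'w" and \<beta> :: "'g \<Rightarrow> 'v \<Rightarrow> 'v"
  assumes surj: "N \<subseteq> d ` fin_supp \<Omega>" "d' ` fin_supp \<Omega>' = N"
    and C\<^sub>1: "0 < C\<^sub>1" "\<forall>y\<in>fin_supp \<Omega>'. \<exists>x\<in>fin_supp \<Omega>. d x = d' y \<and> l1norm x \<le> C\<^sub>1 * l1norm y"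
    and C\<^sub>2: "0 < C\<^sub>2"
      "\<forall>x\<in>fin_supp \<Omega>. d x \<in> N \<longrightarrow> (\<exists>y\<in>fin_supp \<Omega>'. d' y = d x \<and> l1norm y \<le> C\<^sub>2 * l1norm x)"
  shows "\<exists>C>0. \<forall>n\<in>N.
           filling_norm \<Omega>' \<beta> d' n \<le> C * filling_norm \<Omega> \<alpha> d n \<and>
           filling_norm \<Omega> \<alpha> d n \<le> C * filling_norm \<Omega>' \<beta> d' n"
proof (intro exI[of _ "max C\<^sub>1 C\<^sub>2"] conjI ballI)
  show "0 < max C\<^sub>1 C\<^sub>2" using C\<^sub>1(1) by simp
  fix n assume n: "n \<in> N"
  have "n \<in> d ` fin_supp \<Omega>" "n \<in> d' ` fin_supp \<Omega>'" using surj n by auto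
  then have fill: "\<exists>x\<in>fin_supp \<Omega>. d x = n" "\<exists>y\<in>fin_supp \<Omega>'. d' y = n"
    by (metis imageE)+
  have "\<forall>x\<in>fin_supp \<Omega>. d x = n \<longrightarrow> (\<exists>y\<in>fin_supp \<Omega>'. d' y = n \<and> l1norm y \<le> C\<^sub>2 * l1norm x)"
    using C\<^sub>2(2) n by auto
  then have "filling_norm \<Omega>' \<beta> d' n \<le> C\<^sub>2 * filling_norm \<Omega> \<alpha> d n"
    by (rule filling_norm_le_scaled[OF fill(1) C\<^sub>2(1)])
  also have "\<dots> \<le> max C\<^sub>1 C\<^sub>2 * filling_norm \<Omega> \<alpha> d n"
    by (rule mult_right_mono[OF max.cobounded2 filling_norm_nonneg[OF fill(1)]])
  finally show "filling_norm \<Omega>' \<beta> d' n \<le> max C\<^sub>1 C\<^sub>2 * filling_norm \<Omega> \<alpha> d n" .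
  have "\<forall>y\<in>fin_supp \<Omega>'. d' y = n \<longrightarrow> (\<exists>x\<in>fin_supp \<Omega>. d x = n \<and> l1norm x \<le> C\<^sub>1 * l1norm y)"
    using C\<^sub>1(2) by auto
  then have "filling_norm \<Omega> \<alpha> d n \<le> C\<^sub>1 * filling_norm \<Omega>' \<beta> d' n"
    by (rule filling_norm_le_scaled[OF fill(2) C\<^sub>1(1)])
  also have "\<dots> \<le> max C\<^sub>1 C\<^sub>2 * filling_norm \<Omega>' \<beta> d' n"
    by (rule mult_right_mono[OF max.cobounded1 filling_norm_nonneg[OF fill(2)]])
  finally show "filling_norm \<Omega> \<alpha> d n \<le> max C\<^sub>1 C\<^sub>2 * filling_norm \<Omega>' \<beta> d' n" .
qed

theorem proposition4p5:
  fixes M :: "('g::{group_add, t2_space}, 'm) gmod"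
    and H :: "'g set"
    and N :: "'m set"
    and \<Omega> :: "'w set" and \<alpha> :: "'g \<Rightarrow> 'w \<Rightarrow> 'w" and d :: "('w \<Rightarrow> rat) \<Rightarrow> 'm"
    and \<Omega>' :: "'v set" and \<beta> :: "'g \<Rightarrow> 'v \<Rightarrow> 'v" and d' :: "('v \<Rightarrow> rat) \<Rightarrow> 'm"
  assumes G: "tdlc_group TYPE('g)"
    and H: "closed_subgroup H"
    and M: "dmod UNIV M" "dfg UNIV M" "dproj UNIV M"
    and presM: "filling_pres UNIV \<Omega> \<alpha> M d"
    and N_sub: "dsubmod H M N"
    and N_summand: "\<exists>K. dsubmod H M K \<and> N \<inter> K = {gzero M} \<and>
                        (\<forall>x\<in>gcarrier M. \<exists>a\<in>N. \<exists>b\<in>K. x = gadd M a b)"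
    and N_fg: "dfg H (M\<lparr>gcarrier := N\<rparr>)"
    and presN: "filling_pres H \<Omega>' \<beta> (M\<lparr>gcarrier := N\<rparr>) d'"
  shows "\<exists>C>0. \<forall>n\<in>N.
           filling_norm \<Omega>' \<beta> d' n \<le> C * filling_norm \<Omega> \<alpha> d n \<and>
           filling_norm \<Omega> \<alpha> d n \<le> C * filling_norm \<Omega>' \<beta> d' n"
proof -
  note H_group = closed_subgroupD[OF H]
  have NM: "N \<subseteq> gcarrier M" using dsubmodD(1)[OF N_sub] .
  obtain K where K: "dsubmod H M K" "N \<inter> K = {gzero M}" "\<forall>x\<in>gcarrier M. \<exists>a\<in>N. \<exists>b\<in>K. x = gadd M a b"
    using N_summand by blast
  obtain C\<^sub>1 where "0 < C\<^sub>1"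
    "\<forall>y\<in>fin_supp \<Omega>'. \<exists>x\<in>fin_supp \<Omega>. d x = d' y \<and> l1norm x \<le> C\<^sub>1 * l1norm y"
    by (rule filling_inclusion_bounded[OF _ H_group(2) presM presN NM]) (use M(1) in \<open>simp add: dmod_def\<close>)
  moreover obtain C\<^sub>2 where "0 < C\<^sub>2"
    "\<forall>x\<in>fin_supp \<Omega>. d x \<in> N \<longrightarrow> (\<exists>y\<in>fin_supp \<Omega>'. d' y = d x \<and> l1norm y \<le> C\<^sub>2 * l1norm x)"
    by (rule direct_summand_filling_bounded[OF tdlc_group_translation_continuous[OF G]
          H_group M(1,3) presM N_sub N_fg K presN])
  moreover have "N \<subseteq> d ` fin_supp \<Omega>" "d' ` fin_supp \<Omega>' = N"
    using presM presN NM unfolding filling_pres_def by auto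
  ultimately show ?thesis by (intro filling_norms_equivalent)
qed

end
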